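(* The forcing notion $\mathbb{P}$ defined below satisfies the countable chain condition.
   Context: For $n\in\omega$, $2^n$ is the set of $0$-$1$ sequences of length $n$, with metric $d(\eta,\eta')=2^{-k}$ for $\eta\ne\eta'$, where $k$ is least with $\eta\restriction k\neq\eta'\restriction k$. Let $\mathbb{L}_1(n)$ be the set of all $1$-Lipschitz functions $g\colon 2^n\to 2^n$. For a set $A$, $[A]^2$ denotes the set of $2$-element subsets of $A$, and $[A]^{<\omega}$ the finite subsets; $\rho(\alpha,\beta)$ means $\rho(\{\alpha,\beta\})$. A condition $p\in\mathbb{P}$ is a tuple $p=(n^p,s^p,v^p,\mathcal{F}^p,\gamma^p,\rho^p)$ such that: (1) $n^p\in\omega$, $s^p\in[\omega]^{<\omega}$, $v^p\in[\omega_1]^{<\omega}$; (2) $\mathcal{F}^p=\{f^p_i: i\in s^p\}\subseteq\mathbb{L}_1(n^p)$ and $\rho^p\colon[v^p]^2\to s^p$; (2') $\rho^p(\alpha,\beta)\neq\rho^p(\alpha',\beta)$ whenever $\alpha<\alpha'<\beta$; (3) $\gamma^p\colon v^p\to 2^{n^p}$ is one-to-one; (4) $\gamma^p(\alpha)=f^p_{\rho^p(\alpha,\beta)}(\gamma^p(\beta))$ whenever $\alpha<\beta$ are in $v^p$. The order: $p\le q$ ($q$ is stronger) iff (5) $n^p\le n^q$, $s^p\subseteq s^q$, $v^p\subseteq v^q$; (6) $f^q_i(\eta)\restriction n^p=f^p_i(\eta\restriction n^p)$ for each $i\in s^p$ and every $\eta\in 2^{n^q}$; (7) $\gamma^q(\alpha)\restriction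 n^p=\gamma^p(\alpha)$ for every $\alpha\in v^p$; (8) $\rho^q\restriction[v^p]^2=\rho^p$. *)

theory Defs
  imports Complex_Main "HOL-Library.Countable_Set"
begin

definition seq_dist :: "bool list \<Rightarrow> bool list \<Rightarrow> real" where
  "seq_dist x y = (if x = y then 0 else (1/2) ^ (LEAST k. take k x \<noteq> take k y))"

definition twoN :: "nat \<Rightarrow> bool list set" where
  "twoN n = {x. length x = n}"

definition Lip1 :: "nat \<Rightarrow> (bool list \<Rightarrow> bool list) \<Rightarrow> bool" where
  "Lip1 n g \<longleftrightarrow> (\<forall>x\<in>twoN n. g x \<in> twoN n) \<and>
     (\<forall>x\<in>twoN n. \<forall>y\<in>twoN n. seq_dist (g x) (g y) \<le> seq_dist x y)"

text \<open>F i is f_i; rho is applied to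
  two-element sets, rho(alpha,beta) = rho {alpha,beta}.  The components are
  normalised (default values) outside their intended domains so that each
  mathematical condition has a unique representation.\<close>
record 'a cond =
  cn :: nat
  cs :: "nat set"
  cv :: "'a set"
  cF :: "nat \<Rightarrow> bool list \<Rightarrow> bool list"
  cgam :: "'a \<Rightarrow> bool list"
  crho :: "'a set \<Rightarrow> nat"

definition is_cond :: "('a::linorder) cond \<Rightarrow> bool" where
  "is_cond p \<longleftrightarrow>
     finite (cs p) \<and> finite (cv p) \<and>
     (\<forall>i\<in>cs p. Lip1 (cn p) (cF p i)) \<and>
     (\<forall>a\<in>cv p. \<forall>b\<in>cv p. a \<noteq> b \<longrightarrow> crho p {a, b} \<in> cs p) \<and>
     (\<forall>a\<in>cv p. \<forall>a'\<in>cv p. \<forall>b\<in>cv p. a < a' \<and> a' < b \<longrightarrow> crho p {a, b} \<noteq> crho p {a', b}) \<and>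
     (\<forall>a\<in>cv p. cgam p a \<in> twoN (cn p)) \<and> inj_on (cgam p) (cv p) \<and>
     (\<forall>a\<in>cv p. \<forall>b\<in>cv p. a < b \<longrightarrow> cgam p a = cF p (crho p {a, b}) (cgam p b)) \<and>
     \<comment> \<open>normalisation outside the domains\<close>
     (\<forall>i. i \<notin> cs p \<longrightarrow> cF p i = (\<lambda>_. [])) \<and>
     (\<forall>i\<in>cs p. \<forall>x. x \<notin> twoN (cn p) \<longrightarrow> cF p i x = []) \<and>
     (\<forall>a. a \<notin> cv p \<longrightarrow> cgam p a = []) \<and>
     (\<forall>e. (\<not> (\<exists>a\<in>cv p. \<exists>b\<in>cv p. a \<noteq> b \<and> e = {a, b})) \<longrightarrow> crho p e = 0)"

text \<open>cond_le p q: q is stronger than p.\<close>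
definition cond_le :: "'a cond \<Rightarrow> 'a cond \<Rightarrow> bool" where
  "cond_le p q \<longleftrightarrow>
     cn p \<le> cn q \<and> cs p \<subseteq> cs q \<and> cv p \<subseteq> cv q \<and>
     (\<forall>i\<in>cs p. \<forall>x\<in>twoN (cn q). take (cn p) (cF q i x) = cF p i (take (cn p) x)) \<and>
     (\<forall>a\<in>cv p. take (cn p) (cgam q a) = cgam p a) \<and>
     (\<forall>a\<in>cv p. \<forall>b\<in>cv p. a \<noteq> b \<longrightarrow> crho q {a, b} = crho p {a, b})"

definition compatible :: "('a::linorder) cond \<Rightarrow> 'a cond \<Rightarrow> bool" where
  "compatible p q \<longleftrightarrow> (\<exists>r. is_cond r \<and> cond_le p r \<and> cond_le q r)"

definition antichain :: "('a::linorder) cond set \<Rightarrow> bool" where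
  "antichain A \<longleftrightarrow> A \<subseteq> {p. is_cond p} \<and>
     (\<forall>p\<in>A. \<forall>q\<in>A. p \<noteq> q \<longrightarrow> \<not> compatible p q)"

end

theory Submission
  imports Defs
begin

(*
  Suppose A is an uncountable antichain. Each condition has a "type" (its height n, its
  functions, and its gamma and rho read along the increasing enumeration of its domain) taking
  values in a countable set, so uncountably many members of A share a type. Since initial
  segments of the index order are countable, a Delta-system argument on their domains yields
  two of them, p and q, whose domains have a common initial segment as root and disjoint
  tails; having the same type, p and q agree on the root. They are amalgamated one level
  higher: gamma is extended by a last bit marking the ordinals of q outside the root, the old
  functions carry this bit along, and each new pair {a, b} of a p-only and a q-only ordinal
  gets a fresh index whose function is constant with value gamma(min {a, b}).
*)

lemma seq_dist_snoc:
  assumes "length x = n" "length y = n"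
  shows "seq_dist (x @ [b]) (y @ [c]) =
    (if x = y then (if b = c then 0 else (1/2) ^ Suc n) else seq_dist x y)"
proof (cases "x = y")
  case True
  have "(LEAST k. take k (x @ [b]) \<noteq> take k (x @ [c])) = Suc n" if "b \<noteq> c"
  proof (rule Least_equality)
    show "take (Suc n) (x @ [b]) \<noteq> take (Suc n) (x @ [c])" using assms that by simp
    fix k assume "take k (x @ [b]) \<noteq> take k (x @ [c])"
    then show "Suc n \<le> k" using assms by (cases "k \<le> n") auto
  qed
  then show ?thesis using True by (simp add: seq_dist_def)
next
  case False
  define l where "l = (LEAST k. take k x \<noteq> take k y)"
  have "take n x \<noteq> take n y" using assms False by simp
  then have l: "l \<le> n" "take l x \<noteq> take l y"
    unfolding l_def by (rule Least_le, rule LeastI)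
  have "(LEAST k. take k (x @ [b]) \<noteq> take k (y @ [c])) = l"
  proof (rule Least_equality)
    show "take l (x @ [b]) \<noteq> take l (y @ [c])" using l assms by simp
    fix k assume "take k (x @ [b]) \<noteq> take k (y @ [c])"
    then show "l \<le> k" using not_less_Least[of k "\<lambda>k. take k x \<noteq> take k y"] l assms
      by (fastforce simp: l_def)
  qed
  then show ?thesis using False assms by (simp add: seq_dist_def l_def)
qed

lemma seq_dist_nonneg: "0 \<le> seq_dist x y"
  by (simp add: seq_dist_def)

lemma seq_dist_ge:
  assumes "length x = n" "length y = n" "x \<noteq> y"
  shows "(1/2) ^ n \<le> seq_dist x y"
proof -
  have "take n x \<noteq> take n y" using assms by simp
  then have "(LEAST k. take k x \<noteq> take k y) \<le> n" by (rule Least_le)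
  then show ?thesis using assms by (simp add: seq_dist_def power_decreasing)
qed

lemma twoN_Suc_iff: "X \<in> twoN (Suc n) \<longleftrightarrow> (\<exists>x b. X = x @ [b] \<and> x \<in> twoN n)"
proof
  assume "X \<in> twoN (Suc n)"
  then have "X = butlast X @ [last X] \<and> butlast X \<in> twoN n"
    by (cases X rule: rev_cases) (auto simp: twoN_def)
  then show "\<exists>x b. X = x @ [b] \<and> x \<in> twoN n" by blast
qed (auto simp: twoN_def)

lemma take_twoN: "x \<in> twoN (Suc n) \<Longrightarrow> take n x \<in> twoN n"
  by (simp add: twoN_def)

lemma Lip1_snoc:
  assumes f: "Lip1 n f" and g: "\<And>x b. x \<in> twoN n \<Longrightarrow> g (x @ [b]) = f x @ [h x b]"
  shows "Lip1 (Suc n) g"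
  unfolding Lip1_def
proof (intro conjI ballI)
  fix X assume "X \<in> twoN (Suc n)"
  then show "g X \<in> twoN (Suc n)" using f g by (auto simp: twoN_Suc_iff Lip1_def)
next
  fix X Y assume "X \<in> twoN (Suc n)" "Y \<in> twoN (Suc n)"
  then obtain x b y c where X: "X = x @ [b]" "x \<in> twoN n" and Y: "Y = y @ [c]" "y \<in> twoN n"
    by (auto simp: twoN_Suc_iff)
  have fxy: "f x \<in> twoN n" "f y \<in> twoN n" "seq_dist (f x) (f y) \<le> seq_dist x y"
    using f X Y by (auto simp: Lip1_def)
  have lens: "length x = n" "length y = n" "length (f x) = n" "length (f y) = n"
    using X Y fxy by (auto simp: twoN_def)
  have gXY: "seq_dist (g X) (g Y) =
      (if f x = f y then (if h x b = h y c then 0 else (1/2) ^ Suc n) else seq_dist (f x) (f y))"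
    using X Y g lens by (simp add: seq_dist_snoc)
  show "seq_dist (g X) (g Y) \<le> seq_dist X Y"
  proof (cases "x = y")
    case True
    then show ?thesis using gXY X Y lens by (simp add: seq_dist_snoc)
  next
    case False
    have "(1/2::real) ^ Suc n \<le> (1/2) ^ n" by (simp add: power_decreasing)
    also have "\<dots> \<le> seq_dist x y" using seq_dist_ge[OF lens(1,2) False] .
    finally have "(1/2) ^ Suc n \<le> seq_dist x y" .
    then have "seq_dist (g X) (g Y) \<le> seq_dist x y"
      using gXY fxy(3) seq_dist_nonneg[of x y] by (auto split: if_splits)
    then show ?thesis using False X Y lens by (simp add: seq_dist_snoc)
  qed
qed

lemma Lip1_const: "c \<in> twoN n \<Longrightarrow> (\<And>x. x \<in> twoN n \<Longrightarrow> g x = c) \<Longrightarrow> Lip1 n g"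
  by (simp add: Lip1_def seq_dist_def)

lemma uncountable_diff_countable:
  "uncountable B \<Longrightarrow> countable C \<Longrightarrow> \<exists>x\<in>B. x \<notin> C"
  by (meson countable_subset subsetI)

lemma uncountable_fiber:
  fixes f :: "'a \<Rightarrow> 'b::countable"
  assumes "uncountable A"
  shows "\<exists>t. uncountable {x\<in>A. f x = t}"
proof (rule ccontr)
  assume "\<nexists>t. uncountable {x\<in>A. f x = t}"
  then have "countable (\<Union>t. {x\<in>A. f x = t})" by auto
  moreover have "A = (\<Union>t. {x\<in>A. f x = t})" by auto
  ultimately show False using assms by simp
qed

lemma sorted_wrt_tl: "sorted_wrt R xs \<Longrightarrow> sorted_wrt R (tl xs)"
  by (cases xs) auto

lemma sorted_lists_delta_pair:
  fixes L :: "'b \<Rightarrow> ('a::linorder) list"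
  assumes initial_countable: "\<And>a::'a. countable {x. x < a}"
  shows "uncountable B \<Longrightarrow> \<forall>p\<in>B. sorted_wrt (<) (L p) \<and> length (L p) = k \<Longrightarrow>
    \<exists>p\<in>B. \<exists>q\<in>B. p \<noteq> q \<and>
      (\<exists>m. take m (L p) = take m (L q) \<and> set (drop m (L p)) \<inter> set (drop m (L q)) = {})"
proof (induction k arbitrary: B L)
  case 0
  obtain p where p: "p \<in> B" using uncountable_diff_countable[OF "0.prems"(1) countable_empty] by blast
  obtain q where q: "q \<in> B" "q \<noteq> p"
    using uncountable_diff_countable[OF "0.prems"(1) countable_insert[OF countable_empty]] by blast
  have "L p = []" "L q = []" using "0.prems"(2) p q by auto
  then show ?case using p q by force
next
  case (Suc k)
  have ne: "L p \<noteq> []" if "p \<in> B" for p using Suc.prems(2) that by fastforce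
  show ?case
  proof (cases "\<exists>a. uncountable {p\<in>B. hd (L p) = a}")
    case True
    then obtain a where a: "uncountable {p\<in>B. hd (L p) = a}" by blast
    have "\<forall>p\<in>{p\<in>B. hd (L p) = a}. sorted_wrt (<) (tl (L p)) \<and> length (tl (L p)) = k"
      using Suc.prems(2) by (auto simp: sorted_wrt_tl)
    from Suc.IH[OF a this] obtain p q m where pq: "p \<in> B" "hd (L p) = a" "q \<in> B" "hd (L q) = a"
      "p \<noteq> q" "take m (tl (L p)) = take m (tl (L q))"
      "set (drop m (tl (L p))) \<inter> set (drop m (tl (L q))) = {}"
      by blast
    have "take (Suc m) (L p) = take (Suc m) (L q)"
      using pq ne by (metis list.collapse take_Suc_Cons)
    moreover have "set (drop (Suc m) (L p)) \<inter> set (drop (Suc m) (L q)) = {}"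
      using pq by (simp add: drop_Suc)
    ultimately show ?thesis using pq by blast
  next
    case False
    obtain p where p: "p \<in> B" using uncountable_diff_countable[OF Suc.prems(1) countable_empty] by blast
    define M where "M = Max (set (L p))"
    \<comment> \<open>only countably many lists start at or below \<open>M\<close>, so some list starts above all of \<open>L p\<close>\<close>
    have fibers: "countable {q\<in>B. hd (L q) = a}" for a using False by blast
    have "{q\<in>B. hd (L q) \<le> M} = (\<Union>a\<in>insert M {x. x < M}. {q\<in>B. hd (L q) = a})"
      by (auto simp: order_le_less)
    also have "countable \<dots>" using initial_countable fibers by (intro countable_UN) auto
    finally have "countable {q\<in>B. hd (L q) \<le> M}" .
    then obtain q where q: "q \<in> B" "M < hd (L q)"
      using uncountable_diff_countable[OF Suc.prems(1)] by force
    have "x \<le> M" if "x \<in> set (L p)" for x using that by (simp add: M_def)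
    moreover have "hd (L q) \<le> x" if "x \<in> set (L q)" for x
      using that Suc.prems(2) q(1) by (cases "L q") (auto simp: less_imp_le)
    ultimately have "set (L p) \<inter> set (L q) = {}" using q(2) by fastforce
    moreover have "p \<noteq> q" using q(2) ne[OF p] by (auto simp: M_def hd_in_set)
    ultimately show ?thesis using p q by (metis drop0 take0)
  qed
qed

lemma sorted_delta_pair_root:
  fixes xs ys :: "('a::linorder) list"
  assumes "sorted_wrt (<) xs" "sorted_wrt (<) ys"
    and "take m xs = take m ys" "set (drop m xs) \<inter> set (drop m ys) = {}"
  shows "set xs \<inter> set ys = set (take m xs)"
    and "\<And>r z. r \<in> set xs \<inter> set ys \<Longrightarrow> z \<in> set xs \<union> set ys \<Longrightarrow> z < r \<Longrightarrow> z \<in> set xs \<inter> set ys"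
proof -
  have xs: "set xs = set (take m xs) \<union> set (drop m xs)"
    and ys: "set ys = set (take m xs) \<union> set (drop m ys)"
    using assms(3) by (metis append_take_drop_id set_append)+
  show root: "set xs \<inter> set ys = set (take m xs)" using xs ys assms(4) by blast
  have "x < y" if "x \<in> set (take m xs)" "y \<in> set (drop m xs) \<union> set (drop m ys)" for x y
    using that assms(1-3) by (metis Un_iff append_take_drop_id sorted_wrt_append)
  then show "z \<in> set xs \<inter> set ys"
    if "r \<in> set xs \<inter> set ys" "z \<in> set xs \<union> set ys" "z < r" for r z
    using that xs ys root by (metis Un_iff not_less_iff_gr_or_eq)
qed

lemma is_condD:
  assumes "is_cond p"
  shows "finite (cs p)" "finite (cv p)"
    and "\<And>i. i \<in> cs p \<Longrightarrow> Lip1 (cn p) (cF p i)"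
    and "\<And>a b. a \<in> cv p \<Longrightarrow> b \<in> cv p \<Longrightarrow> a \<noteq> b \<Longrightarrow> crho p {a, b} \<in> cs p"
    and "\<And>a a' b. a \<in> cv p \<Longrightarrow> a' \<in> cv p \<Longrightarrow> b \<in> cv p \<Longrightarrow> a < a' \<Longrightarrow> a' < b \<Longrightarrow>
      crho p {a, b} \<noteq> crho p {a', b}"
    and "\<And>a. a \<in> cv p \<Longrightarrow> cgam p a \<in> twoN (cn p)"
    and "inj_on (cgam p) (cv p)"
    and "\<And>a b. a \<in> cv p \<Longrightarrow> b \<in> cv p \<Longrightarrow> a < b \<Longrightarrow> cgam p a = cF p (crho p {a, b}) (cgam p b)"
    and "\<And>e. \<not> (\<exists>a\<in>cv p. \<exists>b\<in>cv p. a \<noteq> b \<and> e = {a, b}) \<Longrightarrow> crho p e = 0"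
  using assms by (simp_all add: is_cond_def)

lemma is_condI:
  assumes "finite (cs p)" "finite (cv p)"
    and "\<And>i. i \<in> cs p \<Longrightarrow> Lip1 (cn p) (cF p i)"
    and "\<And>a b. a \<in> cv p \<Longrightarrow> b \<in> cv p \<Longrightarrow> a \<noteq> b \<Longrightarrow> crho p {a, b} \<in> cs p"
    and "\<And>a a' b. a \<in> cv p \<Longrightarrow> a' \<in> cv p \<Longrightarrow> b \<in> cv p \<Longrightarrow> a < a' \<Longrightarrow> a' < b \<Longrightarrow>
      crho p {a, b} \<noteq> crho p {a', b}"
    and "\<And>a. a \<in> cv p \<Longrightarrow> cgam p a \<in> twoN (cn p)"
    and "inj_on (cgam p) (cv p)"
    and "\<And>a b. a \<in> cv p \<Longrightarrow> b \<in> cv p \<Longrightarrow> a < b \<Longrightarrow> cgam p a = cF p (crho p {a, b}) (cgam p b)"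
    and "\<And>i. i \<notin> cs p \<Longrightarrow> cF p i = (\<lambda>_. [])"
    and "\<And>i x. i \<in> cs p \<Longrightarrow> x \<notin> twoN (cn p) \<Longrightarrow> cF p i x = []"
    and "\<And>a. a \<notin> cv p \<Longrightarrow> cgam p a = []"
    and "\<And>e. \<not> (\<exists>a\<in>cv p. \<exists>b\<in>cv p. a \<noteq> b \<and> e = {a, b}) \<Longrightarrow> crho p e = 0"
  shows "is_cond (p :: ('a::linorder) cond)"
  using assms unfolding is_cond_def by blast

lemma length_cgam: "is_cond p \<Longrightarrow> a \<in> cv p \<Longrightarrow> length (cgam p a) = cn p"
  using is_condD(6)[of p a] by (simp add: twoN_def)

locale amalgamable =
  fixes p q :: "('a::linorder) cond"
  assumes cond_p: "is_cond p" and cond_q: "is_cond q"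
    and same_cn: "cn q = cn p" and same_cs: "cs q = cs p"
    and same_cF: "\<And>i x. i \<in> cs p \<Longrightarrow> x \<in> twoN (cn p) \<Longrightarrow> cF q i x = cF p i x"
    and same_cgam: "\<And>a. a \<in> cv p \<inter> cv q \<Longrightarrow> cgam q a = cgam p a"
    and same_crho: "\<And>a b. a \<in> cv p \<inter> cv q \<Longrightarrow> b \<in> cv p \<inter> cv q \<Longrightarrow> a \<noteq> b \<Longrightarrow>
      crho q {a, b} = crho p {a, b}"
    and root_initial: "\<And>a b. a \<in> cv p \<inter> cv q \<Longrightarrow> b \<in> cv p \<union> cv q \<Longrightarrow> b < a \<Longrightarrow> b \<in> cv p \<inter> cv q"
begin

definition new_edges :: "'a set set" where
  "new_edges = {{a, b} | a b. a \<in> cv p - cv q \<and> b \<in> cv q - cv p}"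

definition new_index :: "'a set \<Rightarrow> nat" where
  "new_index e = Suc (Max (cs p)) + to_nat_on new_edges e"

definition amalg_gam :: "'a \<Rightarrow> bool list" where
  "amalg_gam a = (if a \<in> cv p then cgam p a @ [False] else if a \<in> cv q then cgam q a @ [True] else [])"

text \<open>The last bit of \<open>amalg_gam\<close> marks the ordinals of \<open>q\<close> outside the root. For such a \<open>b\<close>,
  conditions (2') and the injectivity of \<open>cgam q\<close> allow at most one \<open>a < b\<close> in \<open>cv q\<close> with
  \<open>crho q {a, b} = i\<close>, so \<open>amalg_F i\<close> can read off from \<open>cgam q b\<close> alone whether that \<open>a\<close> is
  outside the root too.\<close>
definition q_bit :: "nat \<Rightarrow> bool list \<Rightarrow> bool" where
  "q_bit i y \<longleftrightarrow> (\<exists>a\<in>cv q - cv p. \<exists>b\<in>cv q - cv p. a < b \<and> cgam q b = y \<and> crho q {a, b} = i)"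

definition amalg_F :: "nat \<Rightarrow> bool list \<Rightarrow> bool list" where
  "amalg_F i X =
    (if X \<notin> twoN (Suc (cn p)) then []
     else if i \<in> cs p then cF p i (butlast X) @ [last X \<and> q_bit i (butlast X)]
     else if i \<in> new_index ` new_edges
       then amalg_gam (Min (from_nat_into new_edges (i - Suc (Max (cs p)))))
     else [])"

definition amalg_rho :: "'a set \<Rightarrow> nat" where
  "amalg_rho e =
    (if e \<in> new_edges then new_index e
     else if e \<subseteq> cv p then crho p e else if e \<subseteq> cv q then crho q e else 0)"

definition amalgam :: "'a cond" where
  "amalgam = \<lparr>cn = Suc (cn p), cs = cs p \<union> new_index ` new_edges, cv = cv p \<union> cv q,
     cF = amalg_F, cgam = amalg_gam, crho = amalg_rho\<rparr>"

lemmas p = is_condD[OF cond_p] and q = is_condD[OF cond_q, unfolded same_cn same_cs]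

lemma finite_new_edges: "finite new_edges"
proof -
  have "new_edges = (\<lambda>(a, b). {a, b}) ` ((cv p - cv q) \<times> (cv q - cv p))"
    unfolding new_edges_def by auto
  then show ?thesis using p(2) q(2) by simp
qed

lemma pair_in_new_edges_iff:
  "{a, b} \<in> new_edges \<longleftrightarrow>
    (a \<in> cv p - cv q \<and> b \<in> cv q - cv p) \<or> (b \<in> cv p - cv q \<and> a \<in> cv q - cv p)"
  unfolding new_edges_def by (auto simp: doubleton_eq_iff)

lemma countable_new_edges: "countable new_edges"
  using finite_new_edges by (rule countable_finite)

lemma new_index_inj: "inj_on new_index new_edges"
  using countable_new_edges by (simp add: new_index_def inj_on_def)

lemma new_index_fresh: "new_index e \<notin> cs p"
proof
  assume "new_index e \<in> cs p"
  then have "new_index e \<le> Max (cs p)" using p(1) by simp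
  then show False by (simp add: new_index_def)
qed

lemma amalg_F_new_index:
  "e \<in> new_edges \<Longrightarrow> X \<in> twoN (Suc (cn p)) \<Longrightarrow> amalg_F (new_index e) X = amalg_gam (Min e)"
  using countable_new_edges new_index_fresh by (simp add: amalg_F_def new_index_def)

lemma amalg_gam_twoN: "a \<in> cv p \<union> cv q \<Longrightarrow> amalg_gam a \<in> twoN (Suc (cn p))"
  using p(6) q(6) by (auto simp: amalg_gam_def twoN_def)

lemma amalg_gam_inj: "inj_on amalg_gam (cv p \<union> cv q)"
  using p(7) q(7) by (auto simp: amalg_gam_def inj_on_def)

lemma amalg_rho_p: "a \<in> cv p \<Longrightarrow> b \<in> cv p \<Longrightarrow> amalg_rho {a, b} = crho p {a, b}"
  by (simp add: amalg_rho_def pair_in_new_edges_iff)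

lemma amalg_rho_q:
  assumes "a \<in> cv q" "b \<in> cv q" "a \<noteq> b"
  shows "amalg_rho {a, b} = crho q {a, b}"
  using assms same_crho by (auto simp: amalg_rho_def pair_in_new_edges_iff)

lemma amalg_rho_cases:
  assumes "a < b" "a \<in> cv p \<union> cv q" "b \<in> cv p \<union> cv q"
  obtains (old_p) "a \<in> cv p" "b \<in> cv p" "amalg_rho {a, b} = crho p {a, b}"
    | (old_q) "a \<in> cv q" "b \<in> cv q - cv p" "amalg_rho {a, b} = crho q {a, b}"
    | (new) "{a, b} \<in> new_edges" "amalg_rho {a, b} = new_index {a, b}"
proof (cases "{a, b} \<in> new_edges")
  case True
  then show ?thesis by (intro new) (simp_all add: amalg_rho_def)
next
  case False
  show ?thesis
  proof (cases "b \<in> cv p")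
    case True
    have "a \<in> cv p" using root_initial[of b a] False True assms by (auto simp: pair_in_new_edges_iff)
    then show ?thesis using True by (intro old_p) (simp_all add: amalg_rho_p)
  next
    case b: False
    have "a \<in> cv q" using False b assms by (auto simp: pair_in_new_edges_iff)
    then show ?thesis using b assms by (intro old_q) (simp_all add: amalg_rho_q)
  qed
qed

lemma amalg_rho_range:
  assumes "a \<in> cv p \<union> cv q" "b \<in> cv p \<union> cv q" "a \<noteq> b"
  shows "amalg_rho {a, b} \<in> cs p \<union> new_index ` new_edges"
proof -
  have ordered: "amalg_rho {a, b} \<in> cs p \<union> new_index ` new_edges"
    if "a < b" "a \<in> cv p \<union> cv q" "b \<in> cv p \<union> cv q" for a b
  proof -
    have "a \<noteq> b" using that(1) by simp
    with that show ?thesis by (cases rule: amalg_rho_cases) (simp_all add: p(4) q(4))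
  qed
  from assms(3) consider "a < b" | "b < a" by (rule linorder_neqE)
  then show ?thesis using assms ordered[of a b] ordered[of b a] by cases (simp_all add: insert_commute)
qed

lemma amalg_rho_distinct:
  assumes "a \<in> cv p \<union> cv q" "a' \<in> cv p \<union> cv q" "b \<in> cv p \<union> cv q" "a < a'" "a' < b"
  shows "amalg_rho {a, b} \<noteq> amalg_rho {a', b}"
proof -
  have "a < b" using assms(4,5) by (rule less_trans)
  have old: "amalg_rho {x, b} \<in> cs p" if "x < b" "x \<in> cv p \<union> cv q" "{x, b} \<notin> new_edges" for x
  proof -
    have "x \<noteq> b" using that(1) by simp
    from that(1,2) assms(3) show ?thesis
      by (cases rule: amalg_rho_cases) (use that(3) \<open>x \<noteq> b\<close> in \<open>simp_all add: p(4) q(4)\<close>)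
  qed
  show ?thesis
  proof (cases "{a, b} \<in> new_edges \<or> {a', b} \<in> new_edges")
    case True
    have new: "amalg_rho e = new_index e" "amalg_rho e \<notin> cs p" if "e \<in> new_edges" for e
      using that new_index_fresh by (simp_all add: amalg_rho_def)
    have "{a, b} \<noteq> {a', b}" using assms(4) by (auto simp: doubleton_eq_iff)
    then have "amalg_rho {a, b} \<noteq> amalg_rho {a', b}" if "{a, b} \<in> new_edges" "{a', b} \<in> new_edges"
      using that new(1) inj_onD[OF new_index_inj] by metis
    moreover have "amalg_rho {a, b} \<in> cs p \<longleftrightarrow> amalg_rho {a', b} \<notin> cs p"
      if "({a, b} \<in> new_edges) \<noteq> ({a', b} \<in> new_edges)"
      using that new(2) old[OF \<open>a < b\<close> assms(1)] old[OF assms(5,2)] by blast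
    ultimately show ?thesis using True by metis
  next
    case False
    from \<open>a < b\<close> assms(1,3) have a: "(a \<in> cv p \<and> b \<in> cv p \<and> amalg_rho {a, b} = crho p {a, b}) \<or>
        (a \<in> cv q \<and> b \<in> cv q - cv p \<and> amalg_rho {a, b} = crho q {a, b})"
      by (cases rule: amalg_rho_cases) (use False in auto)
    from assms(5,2,3) have a': "(a' \<in> cv p \<and> b \<in> cv p \<and> amalg_rho {a', b} = crho p {a', b}) \<or>
        (a' \<in> cv q \<and> b \<in> cv q - cv p \<and> amalg_rho {a', b} = crho q {a', b})"
      by (cases rule: amalg_rho_cases) (use False in auto)
    show ?thesis using a a' p(5)[of a a' b] q(5)[of a a' b] assms(4,5) by auto
  qed
qed

lemma q_bit_iff:
  assumes "a \<in> cv q" "b \<in> cv q - cv p" "a < b"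
  shows "q_bit (crho q {a, b}) (cgam q b) \<longleftrightarrow> a \<notin> cv p"
proof
  assume "q_bit (crho q {a, b}) (cgam q b)"
  then obtain a' b' where a'b': "a' \<in> cv q - cv p" "b' \<in> cv q - cv p" "a' < b'"
    "cgam q b' = cgam q b" "crho q {a', b'} = crho q {a, b}"
    unfolding q_bit_def by blast
  have "b' = b" using a'b'(2,4) assms(2) q(7) by (auto dest: inj_onD)
  then have "\<not> a < a'" "\<not> a' < a" using q(5) a'b' assms by (metis DiffD1)+
  then show "a \<notin> cv p" using a'b'(1) by auto
next
  assume "a \<notin> cv p"
  then show "q_bit (crho q {a, b}) (cgam q b)" using assms unfolding q_bit_def by blast
qed

lemma amalg_F_old:
  "i \<in> cs p \<Longrightarrow> x \<in> twoN (cn p) \<Longrightarrow> amalg_F i (x @ [c]) = cF p i x @ [c \<and> q_bit i x]"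
  by (simp add: amalg_F_def twoN_def)

lemma take_amalg_F:
  assumes "i \<in> cs p" "X \<in> twoN (Suc (cn p))"
  shows "take (cn p) (amalg_F i X) = cF p i (take (cn p) X)"
proof -
  obtain x c where "X = x @ [c]" "x \<in> twoN (cn p)" using assms(2) by (auto simp: twoN_Suc_iff)
  moreover have "cF p i x \<in> twoN (cn p)" using p(3)[OF assms(1)] \<open>x \<in> twoN (cn p)\<close>
    by (simp add: Lip1_def)
  ultimately show ?thesis using assms(1) by (simp add: amalg_F_old twoN_def)
qed

lemma amalg_coherent:
  assumes "a < b" "a \<in> cv p \<union> cv q" "b \<in> cv p \<union> cv q"
  shows "amalg_gam a = amalg_F (amalg_rho {a, b}) (amalg_gam b)"
  using assms
proof (cases rule: amalg_rho_cases)
  case old_p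
  then show ?thesis
    using assms p(4)[of a b] p(6)[of b] p(8)[of a b] by (simp add: amalg_gam_def amalg_F_old)
next
  case old_q
  have i: "crho q {a, b} \<in> cs p" using old_q assms(1) q(4)[of a b] by simp
  have gb: "cgam q b \<in> twoN (cn p)" using old_q q(6) by simp
  have "amalg_F (crho q {a, b}) (amalg_gam b) = cgam q a @ [a \<notin> cv p]"
    using old_q assms(1) i gb q(8)[of a b] same_cF[OF i gb] q_bit_iff[of a b]
    by (simp add: amalg_gam_def amalg_F_old)
  then show ?thesis using old_q same_cgam[of a] by (simp add: amalg_gam_def)
next
  case new
  have "Min {a, b} = a" using assms(1) by simp
  then show ?thesis using new amalg_F_new_index amalg_gam_twoN[OF assms(3)] by simp
qed

lemma amalg_F_Lip1:
  assumes "i \<in> cs p \<union> new_index ` new_edges"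
  shows "Lip1 (Suc (cn p)) (amalg_F i)"
proof (cases "i \<in> cs p")
  case True
  show ?thesis
  proof (rule Lip1_snoc)
    show "Lip1 (cn p) (cF p i)" using True by (rule p(3))
    show "amalg_F i (x @ [c]) = cF p i x @ [c \<and> q_bit i x]" if "x \<in> twoN (cn p)" for x c
      using True that by (rule amalg_F_old)
  qed
next
  case False
  then obtain e where e: "e \<in> new_edges" "i = new_index e" using assms by blast
  then have "Min e \<in> cv p \<union> cv q" by (auto simp: new_edges_def min_def split: if_splits)
  then show ?thesis using e(1) unfolding e(2)
    by (intro Lip1_const[OF amalg_gam_twoN]) (simp_all add: amalg_F_new_index)
qed

lemma amalg_rho_normal:
  assumes "\<not> (\<exists>a\<in>cv p \<union> cv q. \<exists>b\<in>cv p \<union> cv q. a \<noteq> b \<and> e = {a, b})"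
  shows "amalg_rho e = 0"
proof -
  have "e \<notin> new_edges"
  proof
    assume "e \<in> new_edges"
    then obtain a b where "a \<in> cv p - cv q" "b \<in> cv q - cv p" "e = {a, b}"
      by (auto simp: new_edges_def)
    moreover have "a \<noteq> b" using \<open>a \<in> cv p - cv q\<close> \<open>b \<in> cv q - cv p\<close> by blast
    ultimately show False using assms by blast
  qed
  moreover have "crho p e = 0" if "e \<subseteq> cv p" using that assms by (intro p(9)) blast
  moreover have "crho q e = 0" if "e \<subseteq> cv q" using that assms by (intro q(9)) blast
  ultimately show ?thesis by (simp add: amalg_rho_def)
qed

lemma amalgam_is_cond: "is_cond amalgam"
proof (rule is_condI, unfold amalgam_def cond.select_convs)
  show "finite (cs p \<union> new_index ` new_edges)" "finite (cv p \<union> cv q)"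
    using p(1,2) q(2) finite_new_edges by simp_all
  show "inj_on amalg_gam (cv p \<union> cv q)" by (rule amalg_gam_inj)
  show "amalg_F i = (\<lambda>_. [])" if "i \<notin> cs p \<union> new_index ` new_edges" for i
    using that by (simp add: amalg_F_def fun_eq_iff)
  show "amalg_F i x = []" if "x \<notin> twoN (Suc (cn p))" for i x
    using that by (simp add: amalg_F_def)
  show "amalg_gam a = []" if "a \<notin> cv p \<union> cv q" for a
    using that by (simp add: amalg_gam_def)
  show "amalg_rho {a, b} \<in> cs p \<union> new_index ` new_edges"
    if "a \<in> cv p \<union> cv q" "b \<in> cv p \<union> cv q" "a \<noteq> b" for a b
    using that by (rule amalg_rho_range)
qed (simp_all add: amalg_F_Lip1 amalg_rho_distinct amalg_gam_twoN amalg_coherent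
  amalg_rho_normal)

lemma amalgam_extends_p: "cond_le p amalgam"
  unfolding cond_le_def amalgam_def cond.select_convs
  by (auto simp: take_amalg_F amalg_rho_p amalg_gam_def length_cgam[OF cond_p])

lemma amalgam_extends_q: "cond_le q amalgam"
  unfolding cond_le_def amalgam_def cond.select_convs same_cn same_cs
  by (auto simp: take_amalg_F same_cF take_twoN amalg_rho_q amalg_gam_def same_cgam
    length_cgam[OF cond_p] length_cgam[OF cond_q, unfolded same_cn])

lemma compatible: "compatible p q"
  unfolding compatible_def using amalgam_is_cond amalgam_extends_p amalgam_extends_q by blast

end

definition cv_list :: "('a::linorder) cond \<Rightarrow> 'a list" where
  "cv_list p = sorted_list_of_set (cv p)"

text \<open>The isomorphism type of a condition: everything about it except the ordinals in its domain.\<close>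
definition cond_type ::
    "('a::linorder) cond \<Rightarrow> nat \<times> nat list \<times> bool list list list \<times> bool list list \<times> nat list list" where
  "cond_type p =
    (cn p, sorted_list_of_set (cs p),
     map (\<lambda>i. map (cF p i) (List.n_lists (cn p) [True, False])) (sorted_list_of_set (cs p)),
     map (cgam p) (cv_list p),
     map (\<lambda>b. map (\<lambda>a. crho p {a, b}) (cv_list p)) (cv_list p))"

lemma cond_type_eqD:
  fixes p q :: "('a::linorder) cond"
  assumes cond: "is_cond p" "is_cond q" and type: "cond_type p = cond_type q"
  shows "cn q = cn p" and same_cs: "cs q = cs p"
    and "\<And>i x. i \<in> cs p \<Longrightarrow> x \<in> twoN (cn p) \<Longrightarrow> cF q i x = cF p i x"
    and "length (cv_list q) = length (cv_list p)"
    and "\<And>i. i < length (cv_list p) \<Longrightarrow> cgam q (cv_list q ! i) = cgam p (cv_list p ! i)"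
    and "\<And>i j. i < length (cv_list p) \<Longrightarrow> j < length (cv_list p) \<Longrightarrow>
      crho q {cv_list q ! i, cv_list q ! j} = crho p {cv_list p ! i, cv_list p ! j}"
proof -
  show "cn q = cn p" using type by (simp add: cond_type_def)
  have "sorted_list_of_set (cs q) = sorted_list_of_set (cs p)" using type by (simp add: cond_type_def)
  then show same_cs: "cs q = cs p" using is_condD(1)[OF cond(1)] is_condD(1)[OF cond(2)]
    by (metis set_sorted_list_of_set)
  show "cF q i x = cF p i x" if "i \<in> cs p" "x \<in> twoN (cn p)" for i x
  proof -
    have "map (cF p i) (List.n_lists (cn p) [True, False]) = map (cF q i) (List.n_lists (cn p) [True, False])"
      using type that(1) is_condD(1)[OF cond(1)] by (auto simp: cond_type_def same_cs)
    moreover have "x \<in> set (List.n_lists (cn p) [True, False])"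
      using that(2) by (auto simp: set_n_lists twoN_def)
    ultimately show ?thesis by simp
  qed
  have maps: "map (cgam p) (cv_list p) = map (cgam q) (cv_list q)"
    "map (\<lambda>b. map (\<lambda>a. crho p {a, b}) (cv_list p)) (cv_list p) =
     map (\<lambda>b. map (\<lambda>a. crho q {a, b}) (cv_list q)) (cv_list q)"
    using type by (simp_all add: cond_type_def)
  then show len: "length (cv_list q) = length (cv_list p)" by (metis length_map)
  show "cgam q (cv_list q ! i) = cgam p (cv_list p ! i)" if "i < length (cv_list p)" for i
    using maps(1) that len by (metis nth_map)
  show "crho q {cv_list q ! i, cv_list q ! j} = crho p {cv_list p ! i, cv_list p ! j}"
    if "i < length (cv_list p)" "j < length (cv_list p)" for i j
    using arg_cong[OF maps(2), of "\<lambda>M. M ! j ! i"] that len by simp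
qed

lemma same_type_amalgamable:
  fixes p q :: "('a::linorder) cond"
  assumes cond: "is_cond p" "is_cond q" and type: "cond_type p = cond_type q"
    and root: "take m (cv_list p) = take m (cv_list q)"
    and tails: "set (drop m (cv_list p)) \<inter> set (drop m (cv_list q)) = {}"
  shows "amalgamable p q"
proof -
  note same = cond_type_eqD[OF cond type]
  have sets: "set (cv_list p) = cv p" "set (cv_list q) = cv q"
    and sorted: "sorted_wrt (<) (cv_list p)" "sorted_wrt (<) (cv_list q)"
    using is_condD(2)[OF cond(1)] is_condD(2)[OF cond(2)] by (simp_all add: cv_list_def)
  note delta = sorted_delta_pair_root[OF sorted root tails, unfolded sets]
  have common_pos: "\<exists>i<length (cv_list p). cv_list p ! i = a \<and> cv_list q ! i = a"
    if "a \<in> cv p \<inter> cv q" for a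
  proof -
    have "a \<in> set (take m (cv_list p))" using that delta(1) by simp
    then obtain i where i: "i < length (take m (cv_list p))" "take m (cv_list p) ! i = a"
      by (auto simp: in_set_conv_nth)
    then have "cv_list p ! i = a" "cv_list q ! i = a" using root by (metis length_take min_less_iff_conj nth_take)+
    then show ?thesis using i by auto
  qed
  show ?thesis
  proof (unfold_locales)
    show "cgam q a = cgam p a" if "a \<in> cv p \<inter> cv q" for a
      using common_pos[OF that] same(5) by metis
    show "crho q {a, b} = crho p {a, b}" if "a \<in> cv p \<inter> cv q" "b \<in> cv p \<inter> cv q" for a b
      using common_pos[OF that(1)] common_pos[OF that(2)] same(6) by metis
    show "b \<in> cv p \<inter> cv q" if "a \<in> cv p \<inter> cv q" "b \<in> cv p \<union> cv q" "b < a" for a b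
      using delta(2) that .
  qed (use cond same(1-3) in auto)
qed

text \<open>The uncountability of the index order is not needed: the \<Delta>-system step only uses that
  its initial segments are countable.\<close>
theorem lemma3p2:
  assumes "\<not> countable (UNIV :: ('a::wellorder) set)"
    and "\<forall>a::'a. countable {x. x < a}"
  shows "\<forall>A :: 'a cond set. antichain A \<longrightarrow> countable A"
proof (intro allI impI)
  fix A :: "'a cond set"
  assume antichain: "antichain A"
  show "countable A"
  proof (rule ccontr)
    assume "uncountable A"
    then obtain t where same_type: "uncountable {p\<in>A. cond_type p = t}"
      using uncountable_fiber[of A cond_type] by blast
    have "\<forall>p\<in>{p\<in>A. cond_type p = t}.
        sorted_wrt (<) (cv_list p) \<and> length (cv_list p) = length (fst (snd (snd (snd t))))"
      by (auto simp: cond_type_def cv_list_def)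
    from sorted_lists_delta_pair[OF _ same_type this] assms(2) obtain p q m where
      pq: "p \<in> A" "q \<in> A" "p \<noteq> q" "cond_type p = t" "cond_type q = t"
      and delta: "take m (cv_list p) = take m (cv_list q)"
        "set (drop m (cv_list p)) \<inter> set (drop m (cv_list q)) = {}"
      by auto
    have "is_cond p" "is_cond q" using antichain pq(1,2) by (auto simp: antichain_def)
    then have "amalgamable p q" using pq(4,5) delta by (intro same_type_amalgamable) simp_all
    then have "compatible p q" by (rule amalgamable.compatible)
    then show False using antichain pq(1-3) by (auto simp: antichain_def)
  qed
qed

end
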